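(* Let $k,\ell\ge2$ be integers. The sequence $(g_{k,\ell}(n))_{n\ge0}$ is $k$-synchronized if and only if $k=\ell$.
   Context: For integers $k,\ell\ge 2$ define $g_{k,\ell}(0)=1$ and $g_{k,\ell}(n)=1+\ell^{\lfloor \log_k n\rfloor}$ for $n>0$. A sequence $(f(n))_{n\ge0}$ of natural numbers is $k$-synchronized if there is a deterministic finite automaton accepting exactly the set of words $(n,m)_k$ with $m=f(n)$, where $(n,m)_k$ denotes the word over the alphabet of digit pairs obtained by writing $n$ and $m$ in base $k$, padding the shorter representation with leading zeros, and reading the digits in parallel. *)

theory Defs
  imports Complex_Main
begin

text \<open>Base-k digits, most significant first; 0 is represented by the empty word.\<close>
function base_digits :: "nat \<Rightarrow> nat \<Rightarrow> nat list" where
  "base_digits k n = (if n = 0 \<or> k < 2 then [] else base_digits k (n div k) @ [n mod k])"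
  by auto
termination
  by (relation "measure snd") auto

definition pad_to :: "nat \<Rightarrow> nat list \<Rightarrow> nat list" where
  "pad_to L xs = replicate (L - length xs) 0 @ xs"

definition pair_word :: "nat \<Rightarrow> nat \<Rightarrow> nat \<Rightarrow> (nat \<times> nat) list" where
  "pair_word k n m =
     (let L = max (length (base_digits k n)) (length (base_digits k m))
      in zip (pad_to L (base_digits k n)) (pad_to L (base_digits k m)))"

definition k_synchronized :: "nat \<Rightarrow> (nat \<Rightarrow> nat) \<Rightarrow> bool" where
  "k_synchronized k f \<longleftrightarrow>
     (\<exists>(Q :: nat set) q0 (\<delta> :: nat \<Rightarrow> nat \<times> nat \<Rightarrow> nat) F.
        finite Q \<and> q0 \<in> Q \<and> F \<subseteq> Q \<and>
        (\<forall>q\<in>Q. \<forall>a<k. \<forall>b<k. \<delta> q (a, b) \<in> Q) \<and>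
        (\<forall>w. set w \<subseteq> {(a, b). a < k \<and> b < k} \<longrightarrow>
             (foldl \<delta> q0 w \<in> F \<longleftrightarrow> (\<exists>n. w = pair_word k n (f n)))))"

definition g_seq :: "nat \<Rightarrow> nat \<Rightarrow> nat \<Rightarrow> nat" where
  "g_seq k l n = (if n = 0 then 1 else 1 + l ^ nat \<lfloor>log (real k) (real n)\<rfloor>)"

end

theory Submission
  imports Defs
begin

text \<open>If f is k-synchronized and the word (n, f n)_k starts with more zeros on one track than
  the automaton has states, the accepting run repeats a state inside that block of zeros; cutting
  out the loop yields a shorter accepted word (n', f n')_k with the same value on that track.
  For n = k^j we have g(n) = 1 + l^j. If k < l, the track of n carries unboundedly many
  leading zeros and the cut gives n' = n with a shorter word, which is absurd. If l < k, the track
  of g(n) does, and the cut gives g(n') = g(n) with n' having fewer digits than n, whereas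
  g(n') = 1 + l^j forces n' to have exactly j + 1 digits. For k = l the second track of
  (n, g n)_k is 10...01 below a first track with nonzero leading digit, apart from three
  short exceptional words, and a five-state automaton recognises exactly these words.\<close>

declare base_digits.simps[simp del]

definition of_digits :: "nat \<Rightarrow> nat list \<Rightarrow> nat" where
  "of_digits k ds = foldl (\<lambda>acc d. acc * k + d) 0 ds"

lemma of_digits_Nil [simp]: "of_digits k [] = 0"
  by (simp add: of_digits_def)

lemma of_digits_snoc [simp]: "of_digits k (ds @ [d]) = of_digits k ds * k + d"
  by (simp add: of_digits_def)

lemma of_digits_single [simp]: "of_digits k [d] = d"
  by (simp add: of_digits_def)

lemma of_digits_eq_0_iff:
  "k > 0 \<Longrightarrow> of_digits k ds = 0 \<longleftrightarrow> (\<forall>d\<in>set ds. d = 0)"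
  by (induction ds rule: rev_induct) auto

lemma of_digits_replicate_zero: "of_digits k (replicate r 0) = 0"
  by (induction r) (simp_all flip: replicate_append_same)

lemma of_digits_replicate_zero_append: "of_digits k (replicate r 0 @ ds) = of_digits k ds"
proof (induction ds rule: rev_induct)
  case (snoc d ds)
  then show ?case by (simp flip: append_assoc)
qed (simp add: of_digits_replicate_zero)

lemma of_digits_one_zeros: "of_digits k (1 # replicate r 0) = k ^ r"
proof (induction r)
  case (Suc r)
  have "of_digits k (1 # replicate (Suc r) 0) = of_digits k ((1 # replicate r 0) @ [0])"
    by (simp add: replicate_append_same)
  also have "\<dots> = k ^ Suc r"
    by (simp only: of_digits_snoc Suc.IH) simp
  finally show ?case .
qed simp

lemma base_digits_0 [simp]: "base_digits k 0 = []"
  by (simp add: base_digits.simps)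

lemma base_digits_pos:
  "k \<ge> 2 \<Longrightarrow> n > 0 \<Longrightarrow> base_digits k n = base_digits k (n div k) @ [n mod k]"
  by (subst base_digits.simps) auto

lemma base_digits_single: "k \<ge> 2 \<Longrightarrow> 0 < d \<Longrightarrow> d < k \<Longrightarrow> base_digits k d = [d]"
  by (simp add: base_digits_pos)

lemma of_digits_base_digits: "k \<ge> 2 \<Longrightarrow> of_digits k (base_digits k n) = n"
proof (induction k n rule: base_digits.induct)
  case (1 k n)
  then show ?case by (cases "n = 0") (simp_all add: base_digits_pos)
qed

lemma base_digits_less: "k \<ge> 2 \<Longrightarrow> d \<in> set (base_digits k n) \<Longrightarrow> d < k"
proof (induction k n rule: base_digits.induct)
  case (1 k n)
  then show ?case by (cases "n = 0") (auto simp: base_digits_pos)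
qed

abbreviation ndigits :: "nat \<Rightarrow> nat \<Rightarrow> nat" where
  "ndigits k n \<equiv> length (base_digits k n)"

lemma ndigits_le_iff: "k \<ge> 2 \<Longrightarrow> ndigits k n \<le> d \<longleftrightarrow> n < k ^ d"
proof (induction k n arbitrary: d rule: base_digits.induct)
  case (1 k n)
  show ?case
  proof (cases "n = 0")
    case False
    show ?thesis
    proof (cases d)
      case (Suc d')
      with 1 False show ?thesis by (simp add: base_digits_pos div_less_iff_less_mult mult.commute)
    qed (use 1 False in \<open>simp add: base_digits_pos\<close>)
  qed (use 1 in simp)
qed

lemma ndigits_pow: "k \<ge> 2 \<Longrightarrow> ndigits k (k ^ j) = Suc j"
  using ndigits_le_iff[of k "k ^ j" j] ndigits_le_iff[of k "k ^ j" "Suc j"] by simp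

lemma pow_ndigits_le: "k \<ge> 2 \<Longrightarrow> n > 0 \<Longrightarrow> k ^ (ndigits k n - 1) \<le> n"
  using ndigits_le_iff[of k n "ndigits k n - 1"] base_digits_pos[of k n] by simp

lemma hd_base_digits: "k \<ge> 2 \<Longrightarrow> n > 0 \<Longrightarrow> hd (base_digits k n) \<noteq> 0"
proof (induction k n rule: base_digits.induct)
  case (1 k n)
  show ?case
  proof (cases "n < k")
    case True
    with 1 show ?thesis by (simp add: base_digits_single)
  next
    case False
    with 1 have "n div k > 0" "base_digits k (n div k) \<noteq> []"
      by (auto simp: base_digits_pos div_greater_zero_iff)
    with 1 show ?thesis by (simp add: base_digits_pos[of k n])
  qed
qed

lemma base_digits_of_digits:
  assumes "k \<ge> 2" "\<forall>d\<in>set ds. d < k" "ds = [] \<or> hd ds \<noteq> 0"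
  shows "base_digits k (of_digits k ds) = ds"
  using assms(2,3)
proof (induction ds rule: rev_induct)
  case (snoc d ds)
  show ?case
  proof (cases "ds = []")
    case True
    with snoc assms(1) show ?thesis by (simp add: base_digits_single)
  next
    case False
    with snoc have "hd ds \<in> set ds" "hd ds \<noteq> 0"
      by simp_all
    with assms(1) have "of_digits k ds \<noteq> 0"
      using of_digits_eq_0_iff[of k ds] by auto
    with snoc assms(1) False show ?thesis by (simp add: base_digits_pos)
  qed
qed simp

lemma g_seq_pos:
  assumes "k \<ge> 2" "n > 0"
  shows "g_seq k l n = 1 + l ^ (ndigits k n - 1)"
proof -
  have "ndigits k n > 0"
    using assms by (simp add: base_digits_pos)
  then have "n < k ^ (ndigits k n - 1 + 1)"
    using ndigits_le_iff[OF assms(1), of n "ndigits k n"] by simp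
  then have "\<lfloor>log (real k) (real n)\<rfloor> = int (ndigits k n - 1)"
    by (rule floor_log_nat_eq_if[OF pow_ndigits_le[OF assms] _ assms(1)])
  with assms show ?thesis by (simp add: g_seq_def)
qed

lemma length_pair_word: "length (pair_word k n m) = max (ndigits k n) (ndigits k m)"
  by (simp add: pair_word_def pad_to_def Let_def)

lemma map_fst_pair_word:
  "map fst (pair_word k n m) = replicate (ndigits k m - ndigits k n) 0 @ base_digits k n"
  by (simp add: pair_word_def pad_to_def Let_def max_def)

lemma map_snd_pair_word:
  "map snd (pair_word k n m) = replicate (ndigits k n - ndigits k m) 0 @ base_digits k m"
  by (simp add: pair_word_def pad_to_def Let_def max_def)

lemma of_digits_fst_pair_word: "k \<ge> 2 \<Longrightarrow> of_digits k (map fst (pair_word k n m)) = n"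
  by (simp add: map_fst_pair_word of_digits_replicate_zero_append of_digits_base_digits)

lemma of_digits_snd_pair_word: "k \<ge> 2 \<Longrightarrow> of_digits k (map snd (pair_word k n m)) = m"
  by (simp add: map_snd_pair_word of_digits_replicate_zero_append of_digits_base_digits)

lemma pair_word_in_alphabet:
  assumes "k \<ge> 2"
  shows "set (pair_word k n m) \<subseteq> {(a, b). a < k \<and> b < k}"
proof
  fix p assume "p \<in> set (pair_word k n m)"
  then have "fst p \<in> set (map fst (pair_word k n m))" "snd p \<in> set (map snd (pair_word k n m))"
    by simp_all
  then have "fst p < k" "snd p < k"
    using assms base_digits_less[OF assms] by (auto simp: map_fst_pair_word map_snd_pair_word)
  then show "p \<in> {(a, b). a < k \<and> b < k}"
    by (cases p) simp
qed

lemma pair_word_same_ndigits: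
  "ndigits k n = ndigits k m \<Longrightarrow> pair_word k n m = zip (base_digits k n) (base_digits k m)"
  by (simp add: pair_word_def pad_to_def)

lemma foldl_closed:
  "(\<And>q x. q \<in> Q \<Longrightarrow> x \<in> A \<Longrightarrow> \<delta> q x \<in> Q) \<Longrightarrow> q \<in> Q \<Longrightarrow> set w \<subseteq> A \<Longrightarrow> foldl \<delta> q w \<in> Q"
  by (induction w arbitrary: q) auto

lemma foldl_pumping_down:
  assumes "finite Q" "q \<in> Q" "\<And>q x. q \<in> Q \<Longrightarrow> x \<in> A \<Longrightarrow> \<delta> q x \<in> Q"
    and "set w \<subseteq> A" "card Q \<le> length w"
  obtains i j where "i < j" "j \<le> card Q" "foldl \<delta> q (take i w @ drop j w) = foldl \<delta> q w"
proof -
  define s where "s i = foldl \<delta> q (take i w)" for i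
  have "s i \<in> Q" for i
    unfolding s_def using assms(4) set_take_subset[of i w]
    by (intro foldl_closed[OF assms(3,2)]) auto
  then have "s ` {0..card Q} \<subseteq> Q"
    by blast
  moreover have "\<not> card {0..card Q} \<le> card Q"
    by simp
  ultimately have "\<not> inj_on s {0..card Q}"
    using card_inj_on_le assms(1) by blast
  then obtain i j where "i \<in> {0..card Q}" "j \<in> {0..card Q}" "i \<noteq> j" "s i = s j"
    unfolding inj_on_def by blast
  then obtain i j where ij: "i < j" "j \<le> card Q" "s i = s j"
    by (metis atLeastAtMost_iff linorder_neqE_nat)
  have "foldl \<delta> q (take i w @ drop j w) = foldl \<delta> (s j) (drop j w)"
    using ij(3) by (simp add: s_def)
  also have "\<dots> = foldl \<delta> q w"
    by (simp add: s_def flip: foldl_append)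
  finally show ?thesis
    using that ij(1,2) by blast
qed

lemma k_synchronized_pumping:
  assumes "k \<ge> 2" "k_synchronized k f"
  obtains N where "\<And>n (proj :: nat \<times> nat \<Rightarrow> nat).
      N \<le> length (pair_word k n (f n)) \<Longrightarrow>
      take N (map proj (pair_word k n (f n))) = replicate N 0 \<Longrightarrow>
      \<exists>n'. length (pair_word k n' (f n')) < length (pair_word k n (f n)) \<and>
        of_digits k (map proj (pair_word k n' (f n'))) = of_digits k (map proj (pair_word k n (f n)))"
proof -
  let ?A = "{(a, b). a < k \<and> b < k}"
  obtain Q q0 \<delta> F where Q: "finite (Q :: nat set)" "q0 \<in> Q"
    and closed': "\<forall>q\<in>Q. \<forall>a<k. \<forall>b<k. \<delta> q (a, b) \<in> Q"
    and accepts': "\<forall>w. set w \<subseteq> ?A \<longrightarrow> (foldl \<delta> q0 w \<in> F \<longleftrightarrow> (\<exists>n. w = pair_word k n (f n)))"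
    using assms(2) unfolding k_synchronized_def by blast
  have closed: "\<And>q x. q \<in> Q \<Longrightarrow> x \<in> ?A \<Longrightarrow> \<delta> q x \<in> Q"
    using closed' by auto
  have accepts: "\<And>w. set w \<subseteq> ?A \<Longrightarrow> foldl \<delta> q0 w \<in> F \<longleftrightarrow> (\<exists>n. w = pair_word k n (f n))"
    using accepts' by blast
  show ?thesis
  proof (rule that[of "card Q"])
    fix n and proj :: "nat \<times> nat \<Rightarrow> nat"
    define w where "w = pair_word k n (f n)"
    assume long: "card Q \<le> length (pair_word k n (f n))"
      and zeros: "take (card Q) (map proj (pair_word k n (f n))) = replicate (card Q) 0"
    have w_in: "set w \<subseteq> ?A"
      unfolding w_def by (rule pair_word_in_alphabet[OF assms(1)])
    obtain i j where ij: "i < j" "j \<le> card Q"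
      and same_state: "foldl \<delta> q0 (take i w @ drop j w) = foldl \<delta> q0 w"
      by (rule foldl_pumping_down[OF Q closed w_in long[folded w_def]])
    have "set (take i w @ drop j w) \<subseteq> ?A"
      using w_in set_take_subset[of i w] set_drop_subset[of j w] by auto
    moreover have "foldl \<delta> q0 w \<in> F"
      using accepts[OF w_in] w_def by blast
    ultimately obtain n' where n': "pair_word k n' (f n') = take i w @ drop j w"
      using accepts same_state by metis
    have "length (take i w @ drop j w) < length w"
      using ij long unfolding w_def by simp
    have zero_prefix: "take r (map proj w) = replicate r 0" if "r \<le> card Q" for r
    proof -
      have "take r (map proj w) = take r (take (card Q) (map proj w))"
        using that by simp
      with zeros show ?thesis
        unfolding w_def using that by simp
    qed
    have "map proj (take i w @ drop j w) = replicate i 0 @ map proj (drop j w)"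
      using zero_prefix[of i] ij by (simp flip: take_map)
    moreover have "map proj w = replicate j 0 @ map proj (drop j w)"
      using zero_prefix[of j] ij append_take_drop_id[of j "map proj w"] by (simp flip: drop_map)
    ultimately show "\<exists>n'. length (pair_word k n' (f n')) < length (pair_word k n (f n)) \<and>
        of_digits k (map proj (pair_word k n' (f n'))) = of_digits k (map proj (pair_word k n (f n)))"
      using n' \<open>length (take i w @ drop j w) < length w\<close>
      unfolding w_def by (metis of_digits_replicate_zero_append)
  qed
qed

lemma k_synchronized_ndigits_bounds:
  assumes "k \<ge> 2" "k_synchronized k f"
  obtains N where "\<And>n. ndigits k (f n) < ndigits k n + N"
    and "\<And>n. ndigits k (f n) + N \<le> ndigits k n \<Longrightarrow> \<exists>n'. f n' = f n \<and> ndigits k n' < ndigits k n"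
proof -
  obtain N where pump: "\<And>n (proj :: nat \<times> nat \<Rightarrow> nat).
      N \<le> length (pair_word k n (f n)) \<Longrightarrow>
      take N (map proj (pair_word k n (f n))) = replicate N 0 \<Longrightarrow>
      \<exists>n'. length (pair_word k n' (f n')) < length (pair_word k n (f n)) \<and>
        of_digits k (map proj (pair_word k n' (f n'))) = of_digits k (map proj (pair_word k n (f n)))"
    using k_synchronized_pumping[OF assms] by blast
  have "ndigits k (f n) < ndigits k n + N" for n
  proof (rule ccontr)
    assume "\<not> ndigits k (f n) < ndigits k n + N"
    then have "N \<le> length (pair_word k n (f n))"
      and "take N (map fst (pair_word k n (f n))) = replicate N 0"
      by (simp_all add: length_pair_word map_fst_pair_word)
    then obtain n' where "length (pair_word k n' (f n')) < length (pair_word k n (f n))"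
      and "of_digits k (map fst (pair_word k n' (f n'))) = of_digits k (map fst (pair_word k n (f n)))"
      using pump by blast
    then show False
      using of_digits_fst_pair_word[OF assms(1)] by simp
  qed
  moreover have "\<exists>n'. f n' = f n \<and> ndigits k n' < ndigits k n"
    if "ndigits k (f n) + N \<le> ndigits k n" for n
  proof -
    from that have "N \<le> length (pair_word k n (f n))"
      and "take N (map snd (pair_word k n (f n))) = replicate N 0"
      by (simp_all add: length_pair_word map_snd_pair_word)
    then obtain n' where "length (pair_word k n' (f n')) < length (pair_word k n (f n))"
      and "of_digits k (map snd (pair_word k n' (f n'))) = of_digits k (map snd (pair_word k n (f n)))"
      using pump by blast
    with that show ?thesis
      using of_digits_snd_pair_word[OF assms(1)] by (auto simp: length_pair_word)
  qed
  ultimately show ?thesis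
    using that by blast
qed

lemma exists_mult_pow_less_pow:
  fixes a b C :: nat
  assumes "0 < a" "a < b"
  shows "\<exists>j. C * a ^ j < b ^ j"
proof -
  have "1 < real b / real a"
    using assms by simp
  then obtain j where "real C < (real b / real a) ^ j"
    using real_arch_pow by blast
  then have "real C * real a ^ j < real b ^ j"
    using assms by (simp add: power_divide pos_less_divide_eq)
  then show ?thesis
    by (metis of_nat_less_iff of_nat_mult of_nat_power)
qed

lemma g_seq_pow: "k \<ge> 2 \<Longrightarrow> g_seq k l (k ^ j) = 1 + l ^ j"
  by (simp add: g_seq_pos ndigits_pow)

lemma ndigits_eq_if_g_seq_eq:
  assumes "k \<ge> 2" "l \<ge> 2" "g_seq k l n = 1 + l ^ j"
  shows "ndigits k n = Suc j"
proof (cases "n = 0")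
  case True
  with assms show ?thesis by (simp add: g_seq_def)
next
  case False
  with assms have "l ^ (ndigits k n - 1) = l ^ j"
    by (simp add: g_seq_pos)
  with assms(2) have "ndigits k n - 1 = j"
    by (simp add: power_inject_exp)
  moreover have "ndigits k n > 0"
    using assms(1) False by (simp add: base_digits_pos)
  ultimately show ?thesis
    by linarith
qed

lemma not_k_synchronized_g_seq_less:
  assumes "k \<ge> 2" "k < l"
  shows "\<not> k_synchronized k (g_seq k l)"
proof
  assume "k_synchronized k (g_seq k l)"
  then obtain N where bound: "\<And>n. ndigits k (g_seq k l n) < ndigits k n + N"
    using k_synchronized_ndigits_bounds[OF assms(1)] by blast
  obtain j where "k ^ N * k ^ j < l ^ j"
    using exists_mult_pow_less_pow[of k l "k ^ N"] assms by auto
  then have "\<not> 1 + l ^ j < k ^ (j + N)"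
    by (simp add: power_add mult.commute)
  then have "ndigits k (k ^ j) + N \<le> ndigits k (g_seq k l (k ^ j))"
    using assms(1) ndigits_le_iff[OF assms(1), of "1 + l ^ j" "j + N"]
    by (simp add: g_seq_pow ndigits_pow)
  with bound[of "k ^ j"] show False
    by simp
qed

lemma not_k_synchronized_g_seq_greater:
  assumes "l \<ge> 2" "l < k"
  shows "\<not> k_synchronized k (g_seq k l)"
proof
  have k: "k \<ge> 2"
    using assms by simp
  assume "k_synchronized k (g_seq k l)"
  then obtain N where shorter: "\<And>n. ndigits k (g_seq k l n) + N \<le> ndigits k n \<Longrightarrow>
      \<exists>n'. g_seq k l n' = g_seq k l n \<and> ndigits k n' < ndigits k n"
    using k_synchronized_ndigits_bounds[OF k] by blast
  obtain j where "2 * k ^ N * l ^ j < k ^ j"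
    using exists_mult_pow_less_pow[of l k "2 * k ^ N"] assms by auto
  then have less: "k ^ N * (1 + l ^ j) < k ^ j"
    by (rule le_less_trans[rotated]) (use assms in simp)
  then have "k ^ N < k ^ j"
    by (rule le_less_trans[rotated]) (use assms in simp)
  then have "N < j"
    using power_less_imp_less_exp k by simp
  then have "k ^ N * (1 + l ^ j) < k ^ N * k ^ (j - N)"
    using less by (simp flip: power_add)
  then have "1 + l ^ j < k ^ (j - N)"
    by (simp only: mult_less_cancel1)
  then have "ndigits k (1 + l ^ j) \<le> j - N"
    using ndigits_le_iff[OF k] by blast
  then have "ndigits k (g_seq k l (k ^ j)) + N \<le> ndigits k (k ^ j)"
    using \<open>N < j\<close> k by (simp add: g_seq_pow ndigits_pow)
  then obtain n' where "g_seq k l n' = g_seq k l (k ^ j)" "ndigits k n' < ndigits k (k ^ j)"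
    using shorter by blast
  then show False
    using ndigits_eq_if_g_seq_eq[OF k assms(1), of n' j] k by (simp add: g_seq_pow ndigits_pow)
qed

lemma base_digits_one_zeros_one:
  assumes "k \<ge> 2"
  shows "base_digits k (1 + k ^ Suc r) = 1 # replicate r 0 @ [1]"
proof -
  have "of_digits k ((1 # replicate r 0) @ [1]) = k ^ r * k + 1"
    by (simp only: of_digits_snoc of_digits_one_zeros)
  then have "of_digits k (1 # replicate r 0 @ [1]) = 1 + k ^ Suc r"
    by (simp add: mult.commute)
  with assms show ?thesis
    using base_digits_of_digits[of k "1 # replicate r 0 @ [1]"] by fastforce
qed

lemma pair_word_g_seq_long:
  assumes "k \<ge> 2" "ndigits k n \<ge> 2"
  shows "pair_word k n (g_seq k k n) = zip (base_digits k n) (1 # replicate (ndigits k n - 2) 0 @ [1])"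
proof -
  have "n > 0"
    using assms(2) by (cases "n = 0") simp_all
  with assms have "g_seq k k n = 1 + k ^ Suc (ndigits k n - 2)"
    by (simp add: g_seq_pos Suc_diff_Suc numeral_2_eq_2)
  then have "base_digits k (g_seq k k n) = 1 # replicate (ndigits k n - 2) 0 @ [1]"
    using base_digits_one_zeros_one[OF assms(1)] by simp
  with assms(2) show ?thesis
    by (simp add: pair_word_same_ndigits)
qed

text \<open>States: 0 initial; 1 accepting, after the word (0,1) of n = 0; 2 inside the zero block
  of the second track; 3 accepting, after any other complete word; 4 sink.\<close>

fun g_step :: "nat \<Rightarrow> nat \<Rightarrow> nat \<times> nat \<Rightarrow> nat" where
  "g_step k q (a, b) =
     (if q = 0 then (if b = 1 then (if a = 0 then 1 else 2) else if b = 2 \<and> a \<noteq> 0 then 3 else 4)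
      else if q = 1 then (if k = 2 \<and> (a, b) = (1, 0) then 3 else 4)
      else if q = 2 then (if b = 0 then 2 else if b = 1 then 3 else 4)
      else 4)"

definition g_final :: "nat set" where
  "g_final = {1, 3}"

text \<open>The four disjuncts are the words (n, g n)_k for g = g_{k,k} and n = 0, for n = 1 when
  k = 2, for the other one-digit n (where g n = 2), and for n \<ge> k.\<close>

definition g_shape :: "nat \<Rightarrow> (nat \<times> nat) list \<Rightarrow> bool" where
  "g_shape k w \<longleftrightarrow> w = [(0, 1)] \<or> (k = 2 \<and> w = [(0, 1), (1, 0)]) \<or> (\<exists>a. a \<noteq> 0 \<and> w = [(a, 2)]) \<or>
     (\<exists>a w'. a \<noteq> 0 \<and> w = (a, 1) # w' \<and> map snd w' = replicate (length w' - 1) 0 @ [1])"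

lemma g_step_ge_3: "q \<ge> 3 \<Longrightarrow> g_step k q x = 4"
  by (cases x) simp

lemma foldl_g_step_sink: "foldl (g_step k) 4 w = 4"
  by (induction w) (simp_all add: g_step_ge_3)

lemma foldl_g_step_3: "foldl (g_step k) 3 w \<in> g_final \<longleftrightarrow> w = []"
  by (cases w) (simp_all add: g_step_ge_3 g_final_def foldl_g_step_sink)

lemma foldl_g_step_1: "foldl (g_step k) 1 w \<in> g_final \<longleftrightarrow> w = [] \<or> (k = 2 \<and> w = [(1, 0)])"
proof (cases w)
  case (Cons x w')
  then show ?thesis
    using foldl_g_step_3[of k w'] by (cases x) (auto simp: g_final_def foldl_g_step_sink)
qed (simp add: g_final_def)

lemma foldl_g_step_2:
  "foldl (g_step k) 2 w \<in> g_final \<longleftrightarrow> map snd w = replicate (length w - 1) 0 @ [1]"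
proof (induction w)
  case (Cons x w)
  obtain a b where x: "x = (a, b)"
    by fastforce
  consider "b = 0" | "b = 1" | "b \<noteq> 0" "b \<noteq> 1"
    by blast
  then show ?case
  proof cases
    case 1
    with Cons.IH x show ?thesis
      by (cases w) (simp_all add: g_final_def)
  next
    case 2
    have "1 # map snd w = replicate (length w) 0 @ [1] \<longleftrightarrow> w = []"
      by (cases w) simp_all
    with 2 x show ?thesis
      by (simp add: foldl_g_step_3)
  next
    case 3
    with x show ?thesis
      by (cases w) (auto simp: g_final_def foldl_g_step_sink)
  qed
qed (simp add: g_final_def)

lemma foldl_g_step_0: "foldl (g_step k) 0 w \<in> g_final \<longleftrightarrow> g_shape k w"
proof (cases w)
  case (Cons x w')
  obtain a b where x: "x = (a, b)"
    by fastforce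
  show ?thesis
    using foldl_g_step_1[of k w'] foldl_g_step_2[of k w'] foldl_g_step_3[of k w']
    unfolding Cons x
    by (auto simp: g_shape_def g_final_def foldl_g_step_sink)
qed (simp add: g_final_def g_shape_def)

lemma g_shape_pair_word_g_seq:
  assumes k: "k \<ge> 2"
  shows "g_shape k (pair_word k n (g_seq k k n))"
proof -
  consider "n = 0" | "0 < n" "n < k" | "k \<le> n"
    by linarith
  then show ?thesis
  proof cases
    case 1
    with k show ?thesis
      by (simp add: g_shape_def g_seq_def pair_word_def pad_to_def base_digits_single)
  next
    case 2
    with k have "base_digits k n = [n]" "g_seq k k n = 2"
      by (simp_all add: base_digits_single g_seq_pos)
    moreover have "base_digits 2 2 = [1, 0]"
      by (simp add: base_digits_pos)
    ultimately show ?thesis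
      using 2 k by (cases "k = 2") (auto simp: g_shape_def pair_word_def pad_to_def base_digits_single)
  next
    case 3
    then have long: "ndigits k n \<ge> 2"
      using ndigits_le_iff[OF k, of n 1] by simp
    then obtain d ds where ds: "base_digits k n = d # ds" "ds \<noteq> []"
      by (cases "base_digits k n") (auto simp: Suc_le_eq)
    moreover have "d \<noteq> 0"
      using hd_base_digits[OF k, of n] 3 k ds by simp
    moreover have "length (replicate (length ds - 1) 0 @ [1 :: nat]) = length ds"
      using ds by simp
    ultimately show ?thesis
      unfolding g_shape_def pair_word_g_seq_long[OF k long]
      by (intro disjI2 exI[of _ d] exI[of _ "zip ds (replicate (length ds - 1) 0 @ [1])"]) simp
  qed
qed

lemma pair_word_g_seq_if_g_shape:
  assumes k: "k \<ge> 2" and shape: "g_shape k w" and alphabet: "set w \<subseteq> {(a, b). a < k \<and> b < k}"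
  shows "\<exists>n. w = pair_word k n (g_seq k k n)"
  using shape unfolding g_shape_def
proof (elim disjE exE conjE)
  assume "w = [(0, 1)]"
  with k show ?thesis
    by (intro exI[of _ 0]) (simp add: g_seq_def pair_word_def pad_to_def base_digits_single)
next
  assume "k = 2" "w = [(0, 1), (1, 0)]"
  moreover have "base_digits 2 1 = [1]" "base_digits 2 2 = [1, 0]"
    by (simp_all add: base_digits_pos)
  moreover from this have "g_seq 2 2 1 = 2"
    by (simp add: g_seq_pos)
  ultimately show ?thesis
    by (intro exI[of _ 1]) (simp add: pair_word_def pad_to_def)
next
  fix a assume a: "a \<noteq> 0" "w = [(a, 2)]"
  with alphabet k have "base_digits k a = [a]" "base_digits k 2 = [2]" "g_seq k k a = 2"
    by (simp_all add: base_digits_single g_seq_pos)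
  with a show ?thesis
    by (intro exI[of _ a]) (simp add: pair_word_def pad_to_def)
next
  fix a w' assume a: "a \<noteq> 0" and w: "w = (a, 1) # w'"
    and tail: "map snd w' = replicate (length w' - 1) 0 @ [1]"
  define ds where "ds = a # map fst w'"
  have "w' \<noteq> []"
    using tail by auto
  have "\<forall>d\<in>set ds. d < k"
    using alphabet unfolding w ds_def by auto
  with k a have digits: "base_digits k (of_digits k ds) = ds"
    by (simp add: base_digits_of_digits ds_def)
  with \<open>w' \<noteq> []\<close> have "ndigits k (of_digits k ds) \<ge> 2"
    by (simp add: ds_def Suc_le_eq)
  then have "pair_word k (of_digits k ds) (g_seq k k (of_digits k ds)) = zip ds (1 # map snd w')"
    using pair_word_g_seq_long[OF k] digits tail \<open>w' \<noteq> []\<close> by (simp add: ds_def)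
  also have "\<dots> = w"
    by (simp add: ds_def w zip_map_fst_snd)
  finally show ?thesis
    by metis
qed

lemma k_synchronized_g_seq:
  assumes k: "k \<ge> 2"
  shows "k_synchronized k (g_seq k k)"
  unfolding k_synchronized_def
proof (intro exI conjI)
  show "\<forall>q\<in>{0..4}. \<forall>a<k. \<forall>b<k. g_step k q (a, b) \<in> {0..4::nat}"
    by simp
  show "\<forall>w. set w \<subseteq> {(a, b). a < k \<and> b < k} \<longrightarrow>
      (foldl (g_step k) 0 w \<in> g_final \<longleftrightarrow> (\<exists>n. w = pair_word k n (g_seq k k n)))"
    using foldl_g_step_0 g_shape_pair_word_g_seq[OF k] pair_word_g_seq_if_g_shape[OF k] by blast
qed (auto simp: g_final_def)

theorem proposition7:
  fixes k l :: nat
  assumes "k \<ge> 2" and "l \<ge> 2"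
  shows "k_synchronized k (g_seq k l) \<longleftrightarrow> k = l"
proof
  assume "k_synchronized k (g_seq k l)"
  then show "k = l"
    using not_k_synchronized_g_seq_less[OF assms(1)] not_k_synchronized_g_seq_greater[OF assms(2)]
    by (cases k l rule: linorder_cases) auto
next
  assume "k = l"
  then show "k_synchronized k (g_seq k l)"
    using k_synchronized_g_seq[OF assms(1)] by simp
qed

end
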